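(* Let $G$ be a reduced simple undirected graph with terminals $s,t$ and maximum degree $\delta$, and let $S$ be a feedback vertex set of $G$ whose size is at most twice the minimum size of a feedback vertex set of $G$. Then $T=S\cup N(S)$ is a tracking set for $G$, and $|T|\le 2(\delta+1)\cdot OPT$, where $OPT$ is the minimum size of a tracking set for $G$.
   Context: An $s$-$t$ path is a simple path from $s$ to $t$. A set $T\subseteq V(G)$ is a tracking set if for any two distinct $s$-$t$ paths $P_1,P_2$, the sequence of vertices of $T\cap V(P_1)$ in the order encountered along $P_1$ differs from the sequence of vertices of $T\cap V(P_2)$ in the order encountered along $P_2$. A graph is reduced if every vertex and every edge lies on at least one $s$-$t$ path. A feedback vertex set is a set of vertices whose removal leaves a forest. $N(S)=\bigcup_{v\in S}N(v)$. *)

theory Defs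
  imports Main
begin

definition simple_graph :: "'a set \<Rightarrow> ('a \<Rightarrow> 'a \<Rightarrow> bool) \<Rightarrow> bool" where
  "simple_graph V E \<longleftrightarrow> finite V \<and> (\<forall>u v. E u v \<longrightarrow> u \<in> V \<and> v \<in> V)
     \<and> (\<forall>u v. E u v \<longrightarrow> E v u) \<and> (\<forall>v. \<not> E v v)"

definition st_path :: "'a set \<Rightarrow> ('a \<Rightarrow> 'a \<Rightarrow> bool) \<Rightarrow> 'a \<Rightarrow> 'a \<Rightarrow> 'a list \<Rightarrow> bool" where
  "st_path V E s t P \<longleftrightarrow> P \<noteq> [] \<and> hd P = s \<and> last P = t \<and> distinct P \<and> set P \<subseteq> V
     \<and> (\<forall>i. Suc i < length P \<longrightarrow> E (P ! i) (P ! Suc i))"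

definition tracking_set :: "'a set \<Rightarrow> ('a \<Rightarrow> 'a \<Rightarrow> bool) \<Rightarrow> 'a \<Rightarrow> 'a \<Rightarrow> 'a set \<Rightarrow> bool" where
  "tracking_set V E s t T \<longleftrightarrow> T \<subseteq> V \<and>
     (\<forall>P1 P2. st_path V E s t P1 \<and> st_path V E s t P2 \<and> P1 \<noteq> P2 \<longrightarrow>
        filter (\<lambda>v. v \<in> T) P1 \<noteq> filter (\<lambda>v. v \<in> T) P2)"

definition reduced :: "'a set \<Rightarrow> ('a \<Rightarrow> 'a \<Rightarrow> bool) \<Rightarrow> 'a \<Rightarrow> 'a \<Rightarrow> bool" where
  "reduced V E s t \<longleftrightarrow>
     (\<forall>v\<in>V. \<exists>P. st_path V E s t P \<and> v \<in> set P) \<and>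
     (\<forall>u v. E u v \<longrightarrow> (\<exists>P. st_path V E s t P \<and>
          (\<exists>i. Suc i < length P \<and> {P ! i, P ! Suc i} = {u, v})))"

definition is_cycle :: "'a set \<Rightarrow> ('a \<Rightarrow> 'a \<Rightarrow> bool) \<Rightarrow> 'a list \<Rightarrow> bool" where
  "is_cycle V E C \<longleftrightarrow> length C \<ge> 3 \<and> distinct C \<and> set C \<subseteq> V
     \<and> (\<forall>i. Suc i < length C \<longrightarrow> E (C ! i) (C ! Suc i)) \<and> E (last C) (hd C)"

text \<open>S is a feedback vertex set iff G - S is a forest, i.e. no cycle avoids S.\<close>
definition feedback_vertex_set :: "'a set \<Rightarrow> ('a \<Rightarrow> 'a \<Rightarrow> bool) \<Rightarrow> 'a set \<Rightarrow> bool" where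
  "feedback_vertex_set V E S \<longleftrightarrow> S \<subseteq> V \<and> (\<forall>C. is_cycle V E C \<longrightarrow> set C \<inter> S \<noteq> {})"

definition nbhd :: "('a \<Rightarrow> 'a \<Rightarrow> bool) \<Rightarrow> 'a set \<Rightarrow> 'a set" where
  "nbhd E S = {u. \<exists>v\<in>S. E v u}"

definition max_degree :: "'a set \<Rightarrow> ('a \<Rightarrow> 'a \<Rightarrow> bool) \<Rightarrow> nat" where
  "max_degree V E = Max ((\<lambda>v. card {u. E v u}) ` V)"

definition min_fvs :: "'a set \<Rightarrow> ('a \<Rightarrow> 'a \<Rightarrow> bool) \<Rightarrow> nat" where
  "min_fvs V E = Min (card ` {S. feedback_vertex_set V E S})"

definition min_tracking :: "'a set \<Rightarrow> ('a \<Rightarrow> 'a \<Rightarrow> bool) \<Rightarrow> 'a \<Rightarrow> 'a \<Rightarrow> nat" where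
  "min_tracking V E s t = Min (card ` {T. tracking_set V E s t T})"

end

theory Submission
  imports Defs
begin

text \<open>
  Two distinct s-t paths with the same trace on \<open>T = S \<union> N(S)\<close> must differ between two
  consecutive tracked vertices, and there the two segments contain a cycle, which meets the
  feedback vertex set \<open>S\<close>. A vertex of \<open>S\<close> tracks all its neighbours, so a segment with
  untracked interior that starts or ends in \<open>S\<close> is a single edge, and the segments coincide.
  Conversely, in a reduced graph every tracking set meets every cycle: an s-t path through an
  edge of an untracked cycle can be rerouted along either arc of the cycle without changing its
  trace. So \<open>OPT\<close> is at least the minimum size of a feedback vertex set, and
  \<open>|S \<union> N(S)| \<le> (\<delta> + 1) |S| \<le> 2 (\<delta> + 1) OPT\<close>.
\<close>

lemma st_path_iff:
  "st_path V E u v P \<longleftrightarrow> P \<noteq> [] \<and> hd P = u \<and> last P = v \<and> distinct P \<and> set P \<subseteq> V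
     \<and> successively E P"
  by (auto simp: st_path_def successively_conv_nth)

lemma is_cycle_iff:
  "is_cycle V E C \<longleftrightarrow> length C \<ge> 3 \<and> distinct C \<and> set C \<subseteq> V \<and> successively E C
     \<and> E (last C) (hd C)"
  by (auto simp: is_cycle_def successively_conv_nth)

lemma successively_rev_symp:
  assumes "symp E" shows "successively E (rev xs) \<longleftrightarrow> successively E xs"
proof -
  have "(\<lambda>x y. E y x) = E" using assms by (auto simp: symp_def)
  then show ?thesis by (metis successively_rev)
qed

lemma st_path_rev: "symp E \<Longrightarrow> st_path V E u v P \<Longrightarrow> st_path V E v u (rev P)"
  by (auto simp: st_path_iff successively_rev_symp hd_rev last_rev simp del: successively_rev)

lemma st_path_loop: "st_path V E u u P \<Longrightarrow> P = [u]"
  unfolding st_path_iff by (cases P) (auto split: if_splits dest: last_in_set)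

lemma st_path_split:
  assumes "st_path V E u v (xs @ w # ys)"
  shows "st_path V E u w (xs @ [w])" and "st_path V E w v (w # ys)"
  using assms by (auto simp: st_path_iff successively_append_iff hd_append split: if_splits)

lemma st_path_replace:
  assumes "st_path V E u v (xs @ Q @ ys)" "st_path V E x y Q" "st_path V E x y Q'"
    and "set Q' \<inter> set xs = {}" "set Q' \<inter> set ys = {}"
  shows "st_path V E u v (xs @ Q' @ ys)"
  using assms by (cases ys) (auto simp: st_path_iff successively_append_iff hd_append)

lemma successively_glue:
  "successively P (xs @ [w]) \<Longrightarrow> successively P (w # ys) \<Longrightarrow> successively P (xs @ w # ys)"
  by (auto simp: successively_append_iff)

lemma is_cycle_of_internally_disjoint_paths:
  assumes "symp E" "st_path V E a w (a # q1 @ [w])" "st_path V E a w (a # q2 @ [w])"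
    and "set q1 \<inter> set q2 = {}" "q1 \<noteq> q2"
  shows "is_cycle V E (a # q1 @ w # rev q2)"
proof -
  have via_q1: "successively E (a # q1 @ [w])" using assms(2) by (simp add: st_path_iff)
  have via_q2: "successively E (w # rev q2 @ [a])"
    using st_path_rev[OF assms(1,3)] by (simp add: st_path_iff del: successively_rev)
  have "successively E ((a # q1) @ w # rev q2 @ [a])"
    using successively_glue[of E "a # q1"] via_q1 via_q2 by simp
  then have "successively E ((a # q1 @ w # rev q2) @ [a])" by simp
  then have "successively E (a # q1 @ w # rev q2) \<and> E (last (a # q1 @ w # rev q2)) a"
    by (simp only: successively_append_iff) simp
  moreover have "length (a # q1 @ w # rev q2) \<ge> 3" using assms(4,5) by (cases q1; cases q2) auto
  ultimately show ?thesis using assms(2-4) by (auto simp: is_cycle_iff st_path_iff)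
qed

lemma cycle_of_diverging_paths:
  assumes "symp E" "st_path V E a v (a # R1)" "st_path V E a v (a # R2)"
    and "R1 \<noteq> []" "R2 \<noteq> []" "hd R1 \<noteq> hd R2"
  shows "\<exists>C. is_cycle V E C \<and> set C \<subseteq> set (a # R1) \<union> set (a # R2)"
proof -
  have "last R1 = last R2" using assms(2-5) by (auto simp: st_path_iff)
  then have "last R1 \<in> set R2" using assms(5) by simp
  then obtain q1 w z1 where R1: "R1 = q1 @ w # z1" and "w \<in> set R2"
    and q1: "\<forall>x\<in>set q1. x \<notin> set R2"
    using assms(4) split_list_first_prop[of R1 "\<lambda>x. x \<in> set R2"] by (metis last_in_set)
  then obtain q2 z2 where R2: "R2 = q2 @ w # z2" by (meson split_list)
  have "st_path V E a w (a # q1 @ [w])" "st_path V E a w (a # q2 @ [w])"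
    using st_path_split(1)[of V E a v "a # q1"] st_path_split(1)[of V E a v "a # q2"] assms(2,3) R1 R2
    by simp_all
  moreover have disjoint: "set q1 \<inter> set q2 = {}" using q1 R2 by auto
  moreover have "q1 \<noteq> q2" using assms(6) R1 R2 disjoint by (cases q1) auto
  ultimately have "is_cycle V E (a # q1 @ w # rev q2)"
    using is_cycle_of_internally_disjoint_paths[OF assms(1)] by blast
  then show ?thesis using R1 R2 by fastforce
qed

lemma distinct_st_paths_contain_cycle:
  assumes "symp E" "st_path V E u v P1" "st_path V E u v P2" "P1 \<noteq> P2"
  shows "\<exists>C. is_cycle V E C \<and> set C \<subseteq> set P1 \<union> set P2"
  using assms(2-4)
proof (induction P1 arbitrary: u P2)
  case Nil
  then show ?case by (simp add: st_path_iff)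
next
  case (Cons a R1)
  have a: "a = u" using Cons.prems(1) by (simp add: st_path_iff)
  obtain R2 where P2: "P2 = a # R2" using Cons.prems(1,2) by (cases P2) (auto simp: st_path_iff)
  have "u \<noteq> v" using Cons.prems st_path_loop by metis
  then have "R1 \<noteq> []" "R2 \<noteq> []" using Cons.prems(1,2) P2 a by (auto simp: st_path_iff)
  then obtain b R1' b' R2' where R1: "R1 = b # R1'" and R2: "R2 = b' # R2'"
    by (meson neq_Nil_conv)
  show ?case
  proof (cases "b = b'")
    case True
    have "st_path V E b v R1" "st_path V E b v R2"
      using st_path_split(2)[of V E u v "[a]"] Cons.prems(1,2) P2 R1 R2 True by simp_all
    then show ?thesis using Cons.IH Cons.prems(3) P2 by fastforce
  next
    case False
    then show ?thesis
      using cycle_of_diverging_paths[OF assms(1), of V a v R1 R2] Cons.prems P2 R1 R2 a by simp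
  qed
qed

lemma st_path_from_fvs_vertex:
  assumes "st_path V E u v P" "u \<in> S" "\<forall>w\<in>set P. w \<in> S \<union> nbhd E S \<longrightarrow> w \<in> {u, v}"
  shows "P = (if u = v then [u] else [u, v])"
proof -
  obtain P' where P: "P = u # P'" using assms(1) by (cases P) (auto simp: st_path_iff)
  show ?thesis
  proof (cases P')
    case Nil
    then show ?thesis using assms(1) P by (simp add: st_path_iff)
  next
    case (Cons y R)
    have "E u y" using assms(1) P Cons by (simp add: st_path_iff)
    then have "y \<in> nbhd E S" using assms(2) by (auto simp: nbhd_def)
    moreover have "y \<noteq> u" using assms(1) P Cons by (auto simp: st_path_iff)
    ultimately have "y = v" using assms(3) P Cons by auto
    moreover have "R = []"
      using assms(1) P Cons \<open>y = v\<close> by (auto simp: st_path_iff split: if_splits dest: last_in_set)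
    ultimately show ?thesis using P Cons \<open>y \<noteq> u\<close> by simp
  qed
qed

lemma st_paths_with_untracked_interior_eq:
  assumes "symp E" "feedback_vertex_set V E S" "st_path V E u v P1" "st_path V E u v P2"
    and tracked: "\<forall>w\<in>set P1 \<union> set P2. w \<in> S \<union> nbhd E S \<longrightarrow> w \<in> {u, v}"
  shows "P1 = P2"
proof (rule ccontr)
  assume "P1 \<noteq> P2"
  then obtain C where "is_cycle V E C" "set C \<subseteq> set P1 \<union> set P2"
    using distinct_st_paths_contain_cycle[OF assms(1,3,4)] by blast
  then obtain x where "x \<in> S" "x \<in> set P1 \<union> set P2"
    using assms(2) unfolding feedback_vertex_set_def by blast
  then consider "u \<in> S" | "v \<in> S" using tracked by auto
  then show False
  proof cases
    case 1
    then show False using st_path_from_fvs_vertex[OF assms(3) 1] st_path_from_fvs_vertex[OF assms(4) 1]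
        tracked \<open>P1 \<noteq> P2\<close> by auto
  next
    case 2
    have "\<forall>w\<in>set (rev P1) \<union> set (rev P2). w \<in> S \<union> nbhd E S \<longrightarrow> w \<in> {v, u}"
      using tracked by auto
    then have "rev P1 = (if v = u then [v] else [v, u])" "rev P2 = (if v = u then [v] else [v, u])"
      using st_path_from_fvs_vertex[OF st_path_rev[OF assms(1,3)] 2]
        st_path_from_fvs_vertex[OF st_path_rev[OF assms(1,4)] 2] by simp_all
    then show False using \<open>P1 \<noteq> P2\<close> by (metis rev_rev_ident)
  qed
qed

lemma st_paths_with_same_trace_eq:
  assumes "symp E" "feedback_vertex_set V E S" "st_path V E u v P1" "st_path V E u v P2"
    and "filter (\<lambda>w. w \<in> S \<union> nbhd E S) P1 = filter (\<lambda>w. w \<in> S \<union> nbhd E S) P2"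
  shows "P1 = P2"
  using assms(3-5)
proof (induction "length P1" arbitrary: u P1 P2 rule: less_induct)
  case less
  let ?T = "S \<union> nbhd E S"
  obtain R1 R2 where P1: "P1 = u # R1" and P2: "P2 = u # R2"
    using less.prems(1,2) by (cases P1; cases P2) (auto simp: st_path_iff)
  have same_trace: "filter (\<lambda>w. w \<in> ?T) R1 = filter (\<lambda>w. w \<in> ?T) R2"
    using less.prems(3) P1 P2 by (simp split: if_splits)
  show ?case
  proof (cases "filter (\<lambda>w. w \<in> ?T) R1")
    case Nil
    then have "\<forall>w\<in>set R1 \<union> set R2. w \<notin> ?T"
      using same_trace by (metis (mono_tags, lifting) Un_iff filter_empty_conv)
    then show ?thesis
      using st_paths_with_untracked_interior_eq[OF assms(1,2) less.prems(1,2)] P1 P2 by auto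
  next
    case (Cons c F)
    obtain A1 B1 where R1: "R1 = A1 @ c # B1" and A1: "\<forall>w\<in>set A1. w \<notin> ?T"
      and "c \<in> ?T" and F1: "F = filter (\<lambda>w. w \<in> ?T) B1"
      using filter_eq_ConsD[OF Cons] by blast
    obtain A2 B2 where R2: "R2 = A2 @ c # B2" and A2: "\<forall>w\<in>set A2. w \<notin> ?T"
      and F2: "F = filter (\<lambda>w. w \<in> ?T) B2"
      using filter_eq_ConsD[of _ R2 c F] Cons same_trace by metis
    have "st_path V E u c (u # A1 @ [c])" "st_path V E u c (u # A2 @ [c])"
      using st_path_split(1)[of V E u v "u # A1" c B1] st_path_split(1)[of V E u v "u # A2" c B2]
        less.prems(1,2) P1 P2 R1 R2 by simp_all
    moreover have "\<forall>w\<in>set (u # A1 @ [c]) \<union> set (u # A2 @ [c]). w \<in> ?T \<longrightarrow> w \<in> {u, c}"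
      using A1 A2 by auto
    ultimately have "u # A1 @ [c] = u # A2 @ [c]"
      by (rule st_paths_with_untracked_interior_eq[OF assms(1,2)])
    moreover have "c # B1 = c # B2"
    proof (rule less.hyps)
      show "length (c # B1) < length P1" using P1 R1 by simp
      show "st_path V E c v (c # B1)" "st_path V E c v (c # B2)"
        using st_path_split(2)[of V E u v "u # A1" c B1] st_path_split(2)[of V E u v "u # A2" c B2]
          less.prems(1,2) P1 P2 R1 R2 by simp_all
      show "filter (\<lambda>w. w \<in> ?T) (c # B1) = filter (\<lambda>w. w \<in> ?T) (c # B2)"
        using \<open>c \<in> ?T\<close> F1 F2 by simp
    qed
    ultimately show ?thesis using P1 P2 R1 R2 by simp
  qed
qed

lemma cycle_arcs_ordered:
  assumes "symp E" "is_cycle V E C" and C: "C = c1 @ x # c2 @ y # c3"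
  shows "\<exists>Q1 Q2. Q1 \<noteq> Q2 \<and> st_path V E x y Q1 \<and> st_path V E x y Q2 \<and> set Q1 \<subseteq> set C \<and> set Q2 \<subseteq> set C"
proof (intro exI conjI)
  have cyc: "length C \<ge> 3" "distinct C" "set C \<subseteq> V" "E (last C) (hd C)"
    and path: "st_path V E (hd C) (last C) C"
    using assms(2) by (auto simp: is_cycle_iff st_path_iff)
  have to_y: "st_path V E (hd C) y (c1 @ x # c2 @ [y])"
    and from_y: "st_path V E y (last C) (y # c3)"
    using st_path_split[of V E "hd C" "last C" "c1 @ x # c2" y c3] path C by simp_all
  have to_x: "st_path V E (hd C) x (c1 @ [x])" and arc: "st_path V E x y (x # c2 @ [y])"
    using st_path_split[of V E "hd C" y c1 x "c2 @ [y]"] to_y by simp_all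
  show "st_path V E x y (x # c2 @ [y])" by (fact arc)
  have "E (last (y # c3)) (hd (c1 @ [x]))"
    using cyc(4) C by (cases c1) auto
  then have "successively E ((y # c3) @ c1 @ [x])"
    using from_y to_x by (auto simp only: successively_append_iff st_path_iff)
  then have "st_path V E y x (y # c3 @ c1 @ [x])"
    using cyc(2,3) C by (auto simp: st_path_iff)
  then show "st_path V E x y (x # rev c1 @ rev c3 @ [y])"
    using st_path_rev[OF assms(1)] by fastforce
  show "x # c2 @ [y] \<noteq> x # rev c1 @ rev c3 @ [y]"
  proof
    assume "x # c2 @ [y] = x # rev c1 @ rev c3 @ [y]"
    then have "c2 = rev c1 @ rev c3" by simp
    moreover have "set c1 \<inter> set c2 = {}" "set c3 \<inter> set c2 = {}" using cyc(2) C by auto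
    ultimately show False using cyc(1) C by auto
  qed
qed (use C in auto)

lemma cycle_two_arcs:
  assumes "symp E" "is_cycle V E C" "x \<in> set C" "y \<in> set C" "x \<noteq> y"
  shows "\<exists>Q1 Q2. Q1 \<noteq> Q2 \<and> st_path V E x y Q1 \<and> st_path V E x y Q2 \<and> set Q1 \<subseteq> set C \<and> set Q2 \<subseteq> set C"
proof -
  obtain c1 c' where C: "C = c1 @ x # c'" using assms(3) by (meson split_list)
  then consider "y \<in> set c'" | "y \<in> set c1" using assms(4,5) by auto
  then show ?thesis
  proof cases
    case 1
    then obtain c2 c3 where "c' = c2 @ y # c3" by (meson split_list)
    then show ?thesis using cycle_arcs_ordered[OF assms(1,2)] C by blast
  next
    case 2
    then obtain c2 c3 where "c1 = c2 @ y # c3" by (meson split_list)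
    then obtain Q1 Q2 where "Q1 \<noteq> Q2" "st_path V E y x Q1" "st_path V E y x Q2"
      "set Q1 \<subseteq> set C" "set Q2 \<subseteq> set C"
      using cycle_arcs_ordered[OF assms(1,2), of c2 y c3 x c'] C by auto
    then show ?thesis using st_path_rev[OF assms(1)] by (metis rev_rev_ident set_rev)
  qed
qed

lemma split_list_first_last_in:
  assumes "u \<in> set xs" "u' \<in> set xs" "u \<in> A" "u' \<in> A" "u \<noteq> u'"
  shows "\<exists>p1 x m y p2. xs = p1 @ x # m @ y # p2 \<and> x \<in> A \<and> y \<in> A
           \<and> set p1 \<inter> A = {} \<and> set p2 \<inter> A = {}"
proof -
  obtain p1 x r where xs: "xs = p1 @ x # r" "x \<in> A" and p1: "\<forall>w\<in>set p1. w \<notin> A"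
    using assms(1,3) split_list_first_prop[of xs "\<lambda>w. w \<in> A"] by blast
  have "\<exists>w\<in>set r. w \<in> A" using assms xs p1 by auto
  then obtain m y p2 where "r = m @ y # p2" "y \<in> A" "\<forall>w\<in>set p2. w \<notin> A"
    using split_list_last_prop[of r "\<lambda>w. w \<in> A"] by blast
  then show ?thesis using xs p1 by blast
qed

lemma tracking_set_is_feedback_vertex_set:
  assumes "symp E" "reduced V E s t" "tracking_set V E s t T"
  shows "feedback_vertex_set V E T"
  unfolding feedback_vertex_set_def
proof (intro conjI allI impI)
  show "T \<subseteq> V" using assms(3) by (simp add: tracking_set_def)
  fix C assume cyc: "is_cycle V E C"
  show "set C \<inter> T \<noteq> {}"
  proof
    assume avoid: "set C \<inter> T = {}"
    obtain a b R where C: "C = a # b # R"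
      using cyc by (cases C; cases "tl C") (auto simp: is_cycle_iff)
    then have "E a b" "a \<noteq> b" using cyc by (auto simp: is_cycle_iff)
    then obtain P i where P: "st_path V E s t P"
      and "Suc i < length P" "{P ! i, P ! Suc i} = {a, b}"
      using assms(2) unfolding reduced_def by blast
    then have "{a, b} \<subseteq> set P" by (metis Suc_lessD empty_subsetI insert_subset nth_mem)
    then obtain p1 x m y p2 where P_split: "P = p1 @ x # m @ y # p2"
      and "x \<in> set C" "y \<in> set C" "set p1 \<inter> set C = {}" "set p2 \<inter> set C = {}"
      using split_list_first_last_in[of a P b "set C"] C \<open>a \<noteq> b\<close> by auto

    moreover have "x \<noteq> y" using P P_split by (auto simp: st_path_iff)
    ultimately obtain Q1 Q2 where "Q1 \<noteq> Q2" "st_path V E x y Q1" "st_path V E x y Q2"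
      "set Q1 \<subseteq> set C" "set Q2 \<subseteq> set C"
      using cycle_two_arcs[OF assms(1) cyc] by blast
    have arc: "st_path V E x y (x # m @ [y])"
      using st_path_split(2)[of V E s t p1 x "m @ y # p2"] st_path_split(1)[of V E x t "x # m" y p2]
        P P_split by simp
    have reroute: "st_path V E s t (p1 @ Q @ p2)" if "st_path V E x y Q" "set Q \<subseteq> set C" for Q
      by (rule st_path_replace[OF _ arc that(1)])
        (use P P_split that(2) \<open>set p1 \<inter> set C = {}\<close> \<open>set p2 \<inter> set C = {}\<close> in auto)
    have "st_path V E s t (p1 @ Q1 @ p2)" "st_path V E s t (p1 @ Q2 @ p2)"
      using reroute \<open>st_path V E x y Q1\<close> \<open>st_path V E x y Q2\<close> \<open>set Q1 \<subseteq> set C\<close> \<open>set Q2 \<subseteq> set C\<close>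
      by blast+
    moreover have "filter (\<lambda>w. w \<in> T) Q1 = []" "filter (\<lambda>w. w \<in> T) Q2 = []"
      using avoid \<open>set Q1 \<subseteq> set C\<close> \<open>set Q2 \<subseteq> set C\<close> by (auto simp: filter_empty_conv)
    ultimately show False
      using assms(3) \<open>Q1 \<noteq> Q2\<close> unfolding tracking_set_def by (metis append_same_eq same_append_eq filter_append)
  qed
qed

lemma symp_if_simple_graph: "simple_graph V E \<Longrightarrow> symp E"
  by (simp add: simple_graph_def symp_def)

lemma fvs_closed_nbhd_tracking_set:
  assumes "simple_graph V E" "feedback_vertex_set V E S"
  shows "tracking_set V E s t (S \<union> nbhd E S)"
proof -
  have "S \<union> nbhd E S \<subseteq> V"
    using assms unfolding simple_graph_def feedback_vertex_set_def nbhd_def by blast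
  then show ?thesis
    using st_paths_with_same_trace_eq[OF symp_if_simple_graph[OF assms(1)] assms(2)]
    unfolding tracking_set_def by blast
qed

lemma card_nbhd_le:
  assumes "simple_graph V E" "S \<subseteq> V"
  shows "card (nbhd E S) \<le> max_degree V E * card S"
proof -
  have "finite V" using assms(1) by (simp add: simple_graph_def)
  have "nbhd E S = (\<Union>v\<in>S. {u. E v u})" by (auto simp: nbhd_def)
  then have "card (nbhd E S) \<le> (\<Sum>v\<in>S. card {u. E v u})"
    using card_UN_le[OF finite_subset[OF assms(2) \<open>finite V\<close>]] by simp
  also have "\<dots> \<le> (\<Sum>v\<in>S. max_degree V E)"
    using assms(2) \<open>finite V\<close> by (intro sum_mono) (auto simp: max_degree_def)
  finally show ?thesis by (simp add: mult.commute)
qed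

lemma min_fvs_le_min_tracking:
  assumes "simple_graph V E" "reduced V E s t"
  shows "min_fvs V E \<le> min_tracking V E s t"
proof -
  have "finite V" using assms(1) by (simp add: simple_graph_def)
  have "filter (\<lambda>v. v \<in> V) P = P" if "st_path V E s t P" for P
    using that by (auto simp: st_path_iff intro: filter_True)
  then have "tracking_set V E s t V" by (simp add: tracking_set_def)
  moreover have "finite {T. tracking_set V E s t T}"
    using \<open>finite V\<close> by (auto simp: tracking_set_def intro: finite_subset[of _ "Pow V"])
  ultimately obtain T where T: "tracking_set V E s t T" "card T = min_tracking V E s t"
    using Min_in[of "card ` {T. tracking_set V E s t T}"] unfolding min_tracking_def by fastforce
  have "feedback_vertex_set V E T"
    using tracking_set_is_feedback_vertex_set[OF symp_if_simple_graph[OF assms(1)] assms(2) T(1)] .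
  moreover have "finite {S. feedback_vertex_set V E S}"
    using \<open>finite V\<close> by (auto simp: feedback_vertex_set_def intro: finite_subset[of _ "Pow V"])
  ultimately have "min_fvs V E \<le> card T" unfolding min_fvs_def by (simp add: Min_le)
  then show ?thesis using T(2) by simp
qed

theorem mainTheorem7:
  fixes V :: "'a set" and E :: "'a \<Rightarrow> 'a \<Rightarrow> bool" and s t :: 'a and S :: "'a set"
  assumes "simple_graph V E"
    and "s \<in> V" and "t \<in> V"
    and "reduced V E s t"
    and "feedback_vertex_set V E S"
    and "card S \<le> 2 * min_fvs V E"
  shows "tracking_set V E s t (S \<union> nbhd E S)
    \<and> card (S \<union> nbhd E S) \<le> 2 * (max_degree V E + 1) * min_tracking V E s t"
proof
  show "tracking_set V E s t (S \<union> nbhd E S)"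
    using fvs_closed_nbhd_tracking_set[OF assms(1,5)] .
  have "S \<subseteq> V" using assms(5) by (simp add: feedback_vertex_set_def)
  have "card (S \<union> nbhd E S) \<le> card S + max_degree V E * card S"
    using card_Un_le[of S "nbhd E S"] card_nbhd_le[OF assms(1) \<open>S \<subseteq> V\<close>] by linarith
  also have "\<dots> = (max_degree V E + 1) * card S" by simp
  also have "\<dots> \<le> (max_degree V E + 1) * (2 * min_tracking V E s t)"
    using assms(6) min_fvs_le_min_tracking[OF assms(1,4)] by (intro mult_le_mono2) linarith
  finally show "card (S \<union> nbhd E S) \<le> 2 * (max_degree V E + 1) * min_tracking V E s t"
    by (simp add: ac_simps)
qed

end
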